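(* Every execution path of a cellular multipointed $d$-space $X_\lambda$ is locally injective.
   Context: Work in $\mathbf{Top}$, the category of $\Delta$-generated spaces (or $\Delta$-Hausdorff $\Delta$-generated spaces). $\mathcal{G}(1,1)$: nondecreasing homeomorphisms of $[0,1]$; $*_N$: normalized composition of paths on $[0,1]$ (first on $[0,1/2]$, second on $[1/2,1]$, double speed). A multipointed $d$-space $X=(|X|,X^0,\mathbb{P}^{\mathcal{G}}X)$: a space, a subset of states, a set of continuous execution paths $[0,1]\to|X|$ with endpoints in $X^0$, stable under precomposition by $\mathcal{G}(1,1)$ and $*_N$. Colimits: underlying spaces and states by colimits, execution paths generated by images under $*_N$ and reparametrization. ${\rm Glob}^{\mathcal{G}}(Z)$: quotient of $\{0,1\}\sqcup Z\times[0,1]$ with $(z,0)\sim0$, $(z,1)\sim1$, states $\{0,1\}$, paths $t\mapsto(z,\phi(t))$, $\phi\in\mathcal{G}(1,1)$. Cellular: $X_\lambda=\varinjlim_{\nu<\lambda}X_\nu$ for an ordinal $\lambda$ and colimit-preserving $\nu\mapsto X_\nu$ with $X_0=(X^0,X^0,\varnothing)$ a set and each $X_\nu\to X_{\nu+1}$ a pushout of some ${\rm Glob}^{\mathcal{G}}(\mathbf{S}^{n_\nu-1})\subset{\rm Glob}^{\mathcal{G}}(\mathbf{D}^{n_\nu})$. *)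

theory Defs
  imports "HOL-Analysis.Analysis"
begin

definition G11 :: "(real \<Rightarrow> real) set" where
  "G11 = {\<phi>. homeomorphic_map (top_of_set {0..1}) (top_of_set {0..1}) \<phi> \<and> mono_on {0..1} \<phi>}"

definition ncomp :: "(real \<Rightarrow> 'a) \<Rightarrow> (real \<Rightarrow> 'a) \<Rightarrow> real \<Rightarrow> 'a" (infixl "*N" 70) where
  "(p *N q) = (\<lambda>t. if t \<le> 1/2 then p (2 * t) else q (2 * t - 1))"

record 'a mdspace =
  space :: "'a topology"
  states :: "'a set"
  paths :: "(real \<Rightarrow> 'a) set"

definition mdspace :: "'a mdspace \<Rightarrow> bool" where
  "mdspace X \<longleftrightarrow>
     states X \<subseteq> topspace (space X) \<and>
     (\<forall>p\<in>paths X. continuous_map (top_of_set {0..1}) (space X) p \<and>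
                   p 0 \<in> states X \<and> p 1 \<in> states X) \<and>
     (\<forall>p\<in>paths X. \<forall>\<phi>\<in>G11. p \<circ> \<phi> \<in> paths X) \<and>
     (\<forall>p\<in>paths X. \<forall>q\<in>paths X. p 1 = q 0 \<longrightarrow> p *N q \<in> paths X)"

definition mdmap :: "'a mdspace \<Rightarrow> 'b mdspace \<Rightarrow> ('a \<Rightarrow> 'b) \<Rightarrow> bool" where
  "mdmap X Y f \<longleftrightarrow>
     continuous_map (space X) (space Y) f \<and>
     f ` states X \<subseteq> states Y \<and>
     (\<forall>p\<in>paths X. f \<circ> p \<in> paths Y)"

inductive_set gen_paths :: "(real \<Rightarrow> 'a) set \<Rightarrow> (real \<Rightarrow> 'a) set" for B where
  base: "p \<in> B \<Longrightarrow> p \<in> gen_paths B"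
| reparam: "p \<in> gen_paths B \<Longrightarrow> \<phi> \<in> G11 \<Longrightarrow> p \<circ> \<phi> \<in> gen_paths B"
| concat: "p \<in> gen_paths B \<Longrightarrow> q \<in> gen_paths B \<Longrightarrow> p 1 = q 0 \<Longrightarrow> p *N q \<in> gen_paths B"

text \<open>Points of Glob(Z): the two states 0, 1 and the classes (z,t) with 0<t<1.\<close>
datatype gpt = G0 | G1 | GM "nat \<Rightarrow> real" real

definition glob_q :: "(nat \<Rightarrow> real) \<Rightarrow> real \<Rightarrow> gpt" where
  "glob_q z t = (if t = 0 then G0 else if t = 1 then G1 else GM z t)"

definition glob_carrier :: "(nat \<Rightarrow> real) topology \<Rightarrow> gpt set" where
  "glob_carrier Z = {G0, G1} \<union> {GM z t | z t. z \<in> topspace Z \<and> 0 < t \<and> t < 1}"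

text \<open>Quotient topology of the disjoint union of the discrete space {0,1} and
  Z x [0,1] under (z,0) ~ 0 and (z,1) ~ 1.\<close>
definition glob_topology :: "(nat \<Rightarrow> real) topology \<Rightarrow> gpt topology" where
  "glob_topology Z = topology (\<lambda>U. U \<subseteq> glob_carrier Z \<and>
      openin (prod_topology Z (top_of_set {0..1}))
        {(z, t). z \<in> topspace Z \<and> t \<in> {0..1} \<and> glob_q z t \<in> U})"

definition Glob :: "(nat \<Rightarrow> real) topology \<Rightarrow> gpt mdspace" where
  "Glob Z = \<lparr> space = glob_topology Z,
              states = {G0, G1},
              paths = {(\<lambda>t. glob_q z (\<phi> t)) | z \<phi>. z \<in> topspace Z \<and> \<phi> \<in> G11} \<rparr>"

text \<open>The (n-1)-sphere and the n-disk in R^n (S^{-1} is empty, D^0 a point).\<close>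
definition sphere_m1 :: "nat \<Rightarrow> (nat \<Rightarrow> real) topology" where
  "sphere_m1 n = subtopology (Euclidean_space n) {x. (\<Sum>i<n. (x i)\<^sup>2) = 1}"

definition disk :: "nat \<Rightarrow> (nat \<Rightarrow> real) topology" where
  "disk n = subtopology (Euclidean_space n) {x. (\<Sum>i<n. (x i)\<^sup>2) \<le> 1}"

text \<open>Y together with f : X \<rightarrow> Y and g : Glob(D^n) \<rightarrow> Y is the pushout of
  X \<leftarrow> Glob(S^{n-1}) \<subseteq> Glob(D^n) along the attaching map a
  (colimits computed as stated: underlying spaces and states by colimits,
  execution paths generated).  Since Glob(S^{n-1}) \<rightarrow> Glob(D^n) is injective,
  the pushout of underlying sets is described explicitly.\<close>
definition cell_pushout ::
  "'a mdspace \<Rightarrow> nat \<Rightarrow> (gpt \<Rightarrow> 'a) \<Rightarrow> 'a mdspace \<Rightarrow> ('a \<Rightarrow> 'a) \<Rightarrow> (gpt \<Rightarrow> 'a) \<Rightarrow> bool" where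
  "cell_pushout X n a Y f g \<longleftrightarrow>
     (let S = Glob (sphere_m1 n); D = Glob (disk n);
          XS = topspace (space X); DS = topspace (space D); SS = topspace (space S) in
     mdmap S X a \<and> mdmap X Y f \<and> mdmap D Y g \<and>
     (\<forall>b\<in>SS. g b = f (a b)) \<and>
     topspace (space Y) = f ` XS \<union> g ` DS \<and>
     inj_on f XS \<and> inj_on g (DS - SS) \<and> f ` XS \<inter> g ` (DS - SS) = {} \<and>
     (\<forall>U. openin (space Y) U \<longleftrightarrow>
            U \<subseteq> topspace (space Y) \<and>
            openin (space X) {x \<in> XS. f x \<in> U} \<and>
            openin (space D) {b \<in> DS. g b \<in> U}) \<and>
     states Y = f ` states X \<union> g ` states D \<and>
     paths Y = gen_paths ((\<lambda>p. f \<circ> p) ` paths X \<union> (\<lambda>p. g \<circ> p) ` paths D))"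

definition chain_colimit ::
  "'o::wellorder \<Rightarrow> ('o \<Rightarrow> 'a mdspace) \<Rightarrow> ('o \<Rightarrow> 'o \<Rightarrow> 'a \<Rightarrow> 'a) \<Rightarrow> 'a mdspace \<Rightarrow> ('o \<Rightarrow> 'a \<Rightarrow> 'a) \<Rightarrow> bool" where
  "chain_colimit \<nu> X f Y c \<longleftrightarrow>
     topspace (space Y) = (\<Union>\<mu>\<in>{..<\<nu>}. c \<mu> ` topspace (space (X \<mu>))) \<and>
     (\<forall>\<mu><\<nu>. \<forall>\<rho><\<nu>. \<forall>x\<in>topspace (space (X \<mu>)). \<forall>y\<in>topspace (space (X \<rho>)).
         c \<mu> x = c \<rho> y \<longleftrightarrow> (\<exists>\<sigma>. \<mu> \<le> \<sigma> \<and> \<rho> \<le> \<sigma> \<and> \<sigma> < \<nu> \<and> f \<mu> \<sigma> x = f \<rho> \<sigma> y)) \<and>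
     (\<forall>U. openin (space Y) U \<longleftrightarrow>
            U \<subseteq> topspace (space Y) \<and>
            (\<forall>\<mu><\<nu>. openin (space (X \<mu>)) {x \<in> topspace (space (X \<mu>)). c \<mu> x \<in> U})) \<and>
     states Y = (\<Union>\<mu>\<in>{..<\<nu>}. c \<mu> ` states (X \<mu>)) \<and>
     paths Y = gen_paths (\<Union>\<mu>\<in>{..<\<nu>}. (\<lambda>p. c \<mu> \<circ> p) ` paths (X \<mu>))"

definition is_succ :: "'o::wellorder \<Rightarrow> 'o \<Rightarrow> bool" where
  "is_succ \<nu>' \<nu> \<longleftrightarrow> \<nu> < \<nu>' \<and> \<not> (\<exists>\<mu>. \<nu> < \<mu> \<and> \<mu> < \<nu>')"

definition is_limit :: "'o::wellorder \<Rightarrow> bool" where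
  "is_limit \<nu> \<longleftrightarrow> (\<exists>\<mu>. \<mu> < \<nu>) \<and> \<not> (\<exists>\<mu>. is_succ \<nu> \<mu>)"

definition cellular_tower :: "'o::wellorder \<Rightarrow> ('o \<Rightarrow> 'a mdspace) \<Rightarrow> bool" where
  "cellular_tower lam X \<longleftrightarrow>
     (\<exists>f :: 'o \<Rightarrow> 'o \<Rightarrow> 'a \<Rightarrow> 'a.
        (\<forall>\<nu>\<le>lam. mdspace (X \<nu>)) \<and>
        (\<forall>\<nu> \<mu>. \<nu> \<le> \<mu> \<and> \<mu> \<le> lam \<longrightarrow> mdmap (X \<nu>) (X \<mu>) (f \<nu> \<mu>)) \<and>
        (\<forall>\<nu>\<le>lam. \<forall>x\<in>topspace (space (X \<nu>)). f \<nu> \<nu> x = x) \<and>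
        (\<forall>\<nu> \<mu> \<rho>. \<nu> \<le> \<mu> \<and> \<mu> \<le> \<rho> \<and> \<rho> \<le> lam \<longrightarrow>
            (\<forall>x\<in>topspace (space (X \<nu>)). f \<mu> \<rho> (f \<nu> \<mu> x) = f \<nu> \<rho> x)) \<and>
        (\<forall>\<nu>\<le>lam. \<not> (\<exists>\<mu>. \<mu> < \<nu>) \<longrightarrow>
            X \<nu> = \<lparr> space = discrete_topology (states (X \<nu>)), states = states (X \<nu>), paths = {} \<rparr>) \<and>
        (\<forall>\<nu> \<nu>'. \<nu>' \<le> lam \<and> is_succ \<nu>' \<nu> \<longrightarrow>
            (\<exists>n a g. cell_pushout (X \<nu>) n a (X \<nu>') (f \<nu> \<nu>') g)) \<and>
        (\<forall>\<nu>\<le>lam. is_limit \<nu> \<longrightarrow> chain_colimit \<nu> X f (X \<nu>) (\<lambda>\<mu>. f \<mu> \<nu>)))"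

definition locally_injective :: "(real \<Rightarrow> 'a) \<Rightarrow> bool" where
  "locally_injective p \<longleftrightarrow>
     (\<forall>t\<in>{0..1}. \<exists>V. openin (top_of_set {0..1}) V \<and> t \<in> V \<and> inj_on p V)"

end

theory Submission
  imports Defs
begin

text \<open>
  By transfinite induction along the tower, every stage \<open>X \<nu>\<close> has three properties: the
  transition maps into \<open>X \<nu>\<close> are injective, its execution paths are locally injective, and two
  paths \<open>p\<close>, \<open>q\<close> with \<open>p 1 = q 0\<close> meet near the junction only at the junction itself.  The
  last condition is what keeps \<open>p *N q\<close> locally injective at \<open>1/2\<close>, so the latter two
  properties pass from a set of generating paths to all paths it generates.  In a pushout along
  \<open>Glob(S^(n-1)) \<subseteq> Glob(D^n)\<close> a generating path either comes from the old stage, which embeds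
  injectively, or crosses the new open cell once, its height coordinate being a
  reparametrization of \<open>[0,1]\<close>; in a colimit of a chain, two generating paths are pushed to a
  common earlier stage.
\<close>

section \<open>Local injectivity and reparametrizations\<close>

lemma locally_injective_iff_ball:
  "locally_injective p \<longleftrightarrow> (\<forall>t\<in>{0..1}. \<exists>r>0. inj_on p ({0..1} \<inter> ball t r))"
proof
  assume li: "locally_injective p"
  show "\<forall>t\<in>{0..1}. \<exists>r>0. inj_on p ({0..1} \<inter> ball t r)"
  proof
    fix t :: real assume "t \<in> {0..1}"
    then obtain V where V: "openin (top_of_set {0..1}) V" "t \<in> V" "inj_on p V"
      using li unfolding locally_injective_def by blast
    then obtain r where "r > 0" "ball t r \<inter> {0..1} \<subseteq> V"
      unfolding openin_contains_ball by blast
    then have "inj_on p ({0..1} \<inter> ball t r)"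
      using V(3) inj_on_subset by (metis Int_commute)
    with \<open>r > 0\<close> show "\<exists>r>0. inj_on p ({0..1} \<inter> ball t r)" by blast
  qed
next
  assume balls: "\<forall>t\<in>{0..1}. \<exists>r>0. inj_on p ({0..1} \<inter> ball t r)"
  show "locally_injective p"
    unfolding locally_injective_def
  proof
    fix t :: real assume "t \<in> {0..1}"
    then obtain r where "r > 0" "inj_on p ({0..1} \<inter> ball t r)"
      using balls by blast
    with \<open>t \<in> {0..1}\<close> show "\<exists>V. openin (top_of_set {0..1}) V \<and> t \<in> V \<and> inj_on p V"
      by (intro exI[of _ "{0..1} \<inter> ball t r"]) auto
  qed
qed

lemma G11D:
  assumes "\<phi> \<in> G11"
  shows "continuous_on {0..1} \<phi>" "\<phi> ` {0..1} = {0..1}" "inj_on \<phi> {0..1}" "\<phi> 0 = 0" "\<phi> 1 = 1"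
proof -
  have hom: "homeomorphic_map (top_of_set {0..1}) (top_of_set {0..1}) \<phi>"
    and mono: "mono_on {0..1} \<phi>"
    using assms unfolding G11_def by auto
  show "continuous_on {0..1} \<phi>"
    using homeomorphic_imp_continuous_map[OF hom] by simp
  show onto: "\<phi> ` {0..1} = {0..1}"
    using homeomorphic_imp_surjective_map[OF hom] by simp
  show "inj_on \<phi> {0..1}"
    using homeomorphic_imp_injective_map[OF hom] by simp
  have "0 \<in> \<phi> ` {0..1}" "1 \<in> \<phi> ` {0..1}"
    using onto by auto
  then obtain x y where x: "x \<in> {0..1}" "\<phi> x = 0" and y: "y \<in> {0..1}" "\<phi> y = 1"
    by (metis imageE)
  have "\<phi> 0 \<le> \<phi> x" "\<phi> y \<le> \<phi> 1"
    using mono_onD[OF mono, of 0 x] mono_onD[OF mono, of y 1] x y by auto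
  moreover have "\<phi> 0 \<in> {0..1}" "\<phi> 1 \<in> {0..1}"
    using onto by auto
  ultimately show "\<phi> 0 = 0" "\<phi> 1 = 1"
    using x y by auto
qed

lemma G11_mem_unit_interval:
  assumes "\<phi> \<in> G11" "s \<in> {0..1}"
  shows "\<phi> s \<in> {0..1}"
  using G11D(2)[OF assms(1)] assms(2) by blast

lemma G11_endpoint_iff:
  assumes "\<phi> \<in> G11" "s \<in> {0..1}"
  shows "\<phi> s = 0 \<longleftrightarrow> s = 0" "\<phi> s = 1 \<longleftrightarrow> s = 1"
  using inj_on_eq_iff[OF G11D(3)[OF assms(1)] assms(2), of 0]
    inj_on_eq_iff[OF G11D(3)[OF assms(1)] assms(2), of 1] G11D(4,5)[OF assms(1)]
  by auto

lemma G11_near_0: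
  assumes "\<phi> \<in> G11" "e > 0"
  obtains d where "d > 0" "\<And>s. s \<in> {0..1} \<Longrightarrow> s < d \<Longrightarrow> \<phi> s < e"
proof -
  obtain d where "d > 0" and d: "\<forall>s\<in>{0..1}. dist s 0 < d \<longrightarrow> dist (\<phi> s) (\<phi> 0) < e"
    using continuous_on_iff[THEN iffD1, OF G11D(1)[OF assms(1)], rule_format, of 0 e] assms(2)
    by auto
  show ?thesis
  proof (rule that[OF \<open>d > 0\<close>])
    fix s assume "s \<in> {0..1}" "s < d"
    then have "dist (\<phi> s) 0 < e"
      using d G11D(4)[OF assms(1)] by (auto simp: dist_real_def)
    then show "\<phi> s < e" by (simp add: dist_real_def)
  qed
qed

lemma G11_near_1:
  assumes "\<phi> \<in> G11" "e > 0"
  obtains d where "d > 0" "\<And>s. s \<in> {0..1} \<Longrightarrow> 1 - d < s \<Longrightarrow> 1 - e < \<phi> s"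
proof -
  obtain d where "d > 0" and d: "\<forall>s\<in>{0..1}. dist s 1 < d \<longrightarrow> dist (\<phi> s) (\<phi> 1) < e"
    using continuous_on_iff[THEN iffD1, OF G11D(1)[OF assms(1)], rule_format, of 1 e] assms(2)
    by auto
  show ?thesis
  proof (rule that[OF \<open>d > 0\<close>])
    fix s assume "s \<in> {0..1}" "1 - d < s"
    then have "dist (\<phi> s) 1 < e"
      using d G11D(5)[OF assms(1)] by (auto simp: dist_real_def)
    then show "1 - e < \<phi> s" by (simp add: dist_real_def)
  qed
qed

lemma ncomp_first_half: "t \<le> 1/2 \<Longrightarrow> (p *N q) t = p (2 * t)"
  and ncomp_second_half: "t > 1/2 \<Longrightarrow> (p *N q) t = q (2 * t - 1)"
  by (simp_all add: ncomp_def)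

section \<open>Paths meeting only at their junction\<close>

definition meets_only_at_junction :: "(real \<Rightarrow> 'a) \<Rightarrow> (real \<Rightarrow> 'a) \<Rightarrow> bool" where
  "meets_only_at_junction p q \<longleftrightarrow>
     (p 1 = q 0 \<longrightarrow> (\<exists>e>0. \<forall>s\<in>{0..1}. \<forall>s'\<in>{0..1}.
        1 - e < s \<longrightarrow> s' < e \<longrightarrow> p s = q s' \<longrightarrow> s = 1 \<and> s' = 0))"

definition locally_injective_family :: "(real \<Rightarrow> 'a) set \<Rightarrow> bool" where
  "locally_injective_family P \<longleftrightarrow>
     (\<forall>p\<in>P. locally_injective p) \<and> (\<forall>p\<in>P. \<forall>q\<in>P. meets_only_at_junction p q)"

lemma meets_only_at_junctionI:
  assumes "e > 0"
    and "\<And>s s'. s \<in> {0..1} \<Longrightarrow> s' \<in> {0..1} \<Longrightarrow> 1 - e < s \<Longrightarrow> s' < e \<Longrightarrow> p s = q s'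
           \<Longrightarrow> s = 1 \<and> s' = 0"
  shows "meets_only_at_junction p q"
  using assms unfolding meets_only_at_junction_def by blast

lemma meets_only_at_junctionE:
  assumes "meets_only_at_junction p q" "p 1 = q 0"
  obtains e where "e > 0"
    and "\<And>s s'. s \<in> {0..1} \<Longrightarrow> s' \<in> {0..1} \<Longrightarrow> 1 - e < s \<Longrightarrow> s' < e \<Longrightarrow> p s = q s'
           \<Longrightarrow> s = 1 \<and> s' = 0"
  using assms unfolding meets_only_at_junction_def by blast

lemma meets_only_at_junction_reparam_left:
  assumes meets: "meets_only_at_junction p q" and \<phi>: "\<phi> \<in> G11"
  shows "meets_only_at_junction (p \<circ> \<phi>) q"
proof (cases "p 1 = q 0")
  case True
  obtain e where "e > 0" and junction: "\<And>s s'. s \<in> {0..1} \<Longrightarrow> s' \<in> {0..1}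
      \<Longrightarrow> 1 - e < s \<Longrightarrow> s' < e \<Longrightarrow> p s = q s' \<Longrightarrow> s = 1 \<and> s' = 0"
    using meets_only_at_junctionE[OF meets True] by blast
  obtain d where "d > 0" and near: "\<And>s. s \<in> {0..1} \<Longrightarrow> 1 - d < s \<Longrightarrow> 1 - e < \<phi> s"
    using G11_near_1[OF \<phi> \<open>e > 0\<close>] by blast
  show ?thesis
  proof (rule meets_only_at_junctionI)
    show "min d e > 0" using \<open>d > 0\<close> \<open>e > 0\<close> by simp
    fix s s' assume s: "s \<in> {0..1}" "s' \<in> {0..1}" "1 - min d e < s" "s' < min d e"
      and "(p \<circ> \<phi>) s = q s'"
    then have "\<phi> s = 1 \<and> s' = 0"
      using junction[OF G11_mem_unit_interval[OF \<phi> s(1)] s(2) near[OF s(1)]] by simp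
    then show "s = 1 \<and> s' = 0"
      using G11_endpoint_iff(2)[OF \<phi> s(1)] by simp
  qed
qed (simp add: meets_only_at_junction_def G11D(5)[OF \<phi>])

lemma meets_only_at_junction_reparam_right:
  assumes meets: "meets_only_at_junction p q" and \<phi>: "\<phi> \<in> G11"
  shows "meets_only_at_junction p (q \<circ> \<phi>)"
proof (cases "p 1 = q 0")
  case True
  obtain e where "e > 0" and junction: "\<And>s s'. s \<in> {0..1} \<Longrightarrow> s' \<in> {0..1}
      \<Longrightarrow> 1 - e < s \<Longrightarrow> s' < e \<Longrightarrow> p s = q s' \<Longrightarrow> s = 1 \<and> s' = 0"
    using meets_only_at_junctionE[OF meets True] by blast
  obtain d where "d > 0" and near: "\<And>s. s \<in> {0..1} \<Longrightarrow> s < d \<Longrightarrow> \<phi> s < e"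
    using G11_near_0[OF \<phi> \<open>e > 0\<close>] by blast
  show ?thesis
  proof (rule meets_only_at_junctionI)
    show "min d e > 0" using \<open>d > 0\<close> \<open>e > 0\<close> by simp
    fix s s' assume s: "s \<in> {0..1}" "s' \<in> {0..1}" "1 - min d e < s" "s' < min d e"
      and "p s = (q \<circ> \<phi>) s'"
    then have "s = 1 \<and> \<phi> s' = 0"
      using junction[OF s(1) G11_mem_unit_interval[OF \<phi> s(2)] _ near[OF s(2)]] by simp
    then show "s = 1 \<and> s' = 0"
      using G11_endpoint_iff(1)[OF \<phi> s(2)] by simp
  qed
qed (simp add: meets_only_at_junction_def G11D(4)[OF \<phi>])

lemma meets_only_at_junction_ncomp_left:
  assumes meets: "meets_only_at_junction p2 q"
  shows "meets_only_at_junction (p1 *N p2) q"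
proof (cases "p2 1 = q 0")
  case True
  obtain e where "e > 0" and junction: "\<And>s s'. s \<in> {0..1} \<Longrightarrow> s' \<in> {0..1}
      \<Longrightarrow> 1 - e < s \<Longrightarrow> s' < e \<Longrightarrow> p2 s = q s' \<Longrightarrow> s = 1 \<and> s' = 0"
    using meets_only_at_junctionE[OF meets True] by blast
  show ?thesis
  proof (rule meets_only_at_junctionI)
    show "min (e/2) (1/2) > 0" using \<open>e > 0\<close> by simp
    fix s s' assume s: "s \<in> {0..1}" "s' \<in> {0..1}" "1 - min (e/2) (1/2) < s" "s' < min (e/2) (1/2)"
      and "(p1 *N p2) s = q s'"
    then have "p2 (2 * s - 1) = q s'" "s > 1/2" "1 - e < 2 * s - 1" "s' < e"
      by (auto simp: ncomp_second_half)
    then show "s = 1 \<and> s' = 0"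
      using junction[of "2 * s - 1" s'] s(1,2) by simp
  qed
qed (simp add: meets_only_at_junction_def ncomp_def)

lemma meets_only_at_junction_ncomp_right:
  assumes meets: "meets_only_at_junction p q1"
  shows "meets_only_at_junction p (q1 *N q2)"
proof (cases "p 1 = q1 0")
  case True
  obtain e where "e > 0" and junction: "\<And>s s'. s \<in> {0..1} \<Longrightarrow> s' \<in> {0..1}
      \<Longrightarrow> 1 - e < s \<Longrightarrow> s' < e \<Longrightarrow> p s = q1 s' \<Longrightarrow> s = 1 \<and> s' = 0"
    using meets_only_at_junctionE[OF meets True] by blast
  show ?thesis
  proof (rule meets_only_at_junctionI)
    show "min (e/2) (1/2) > 0" using \<open>e > 0\<close> by simp
    fix s s' assume s: "s \<in> {0..1}" "s' \<in> {0..1}" "1 - min (e/2) (1/2) < s" "s' < min (e/2) (1/2)"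
      and "p s = (q1 *N q2) s'"
    then have "p s = q1 (2 * s')" "s' < 1/2" "1 - e < s" "2 * s' < e"
      by (auto simp: ncomp_first_half)
    then show "s = 1 \<and> s' = 0"
      using junction[of s "2 * s'"] s(1,2) by simp
  qed
qed (simp add: meets_only_at_junction_def ncomp_def)

lemma gen_paths_meets_only_at_junction:
  assumes B: "\<And>p q. p \<in> B \<Longrightarrow> q \<in> B \<Longrightarrow> meets_only_at_junction p q"
    and "p \<in> gen_paths B" "q \<in> gen_paths B"
  shows "meets_only_at_junction p q"
proof -
  have base_right: "meets_only_at_junction p q" if "p \<in> gen_paths B" "q \<in> B" for p q
    using that(1)
  proof induction
    case (base p)
    then show ?case using B that(2) by blast
  next
    case (reparam p \<phi>)
    show ?case by (rule meets_only_at_junction_reparam_left[OF reparam.IH reparam.hyps(2)])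
  next
    case (concat p1 p2)
    then show ?case by (intro meets_only_at_junction_ncomp_left)
  qed
  show ?thesis
    using assms(3)
  proof induction
    case (base q)
    then show ?case using base_right assms(2) by blast
  next
    case (reparam q \<phi>)
    show ?case by (rule meets_only_at_junction_reparam_right[OF reparam.IH reparam.hyps(2)])
  next
    case (concat q1 q2)
    then show ?case by (intro meets_only_at_junction_ncomp_right)
  qed
qed

lemma locally_injective_reparam:
  assumes "locally_injective p" "\<phi> \<in> G11"
  shows "locally_injective (p \<circ> \<phi>)"
  unfolding locally_injective_def
proof
  fix t :: real assume "t \<in> {0..1}"
  then have "\<phi> t \<in> {0..1}" using G11D(2)[OF assms(2)] by blast
  then obtain V where V: "openin (top_of_set {0..1}) V" "\<phi> t \<in> V" "inj_on p V"
    using assms(1) unfolding locally_injective_def by blast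
  have "openin (top_of_set {0..1}) ({0..1} \<inter> \<phi> -` V)"
    using V(1) G11D(1,2)[OF assms(2)] continuous_on_open by metis
  moreover have "inj_on (p \<circ> \<phi>) ({0..1} \<inter> \<phi> -` V)"
    using V(3) G11D(3)[OF assms(2)] by (auto simp: inj_on_def)
  ultimately show "\<exists>V. openin (top_of_set {0..1}) V \<and> t \<in> V \<and> inj_on (p \<circ> \<phi>) V"
    using \<open>t \<in> {0..1}\<close> V(2) by blast
qed

lemma inj_on_ncomp_first_half:
  assumes "inj_on p ({0..1} \<inter> ball (2 * t) r)" "t < 1/2"
  shows "inj_on (p *N q) ({0..1} \<inter> ball t (min (r/2) (1/2 - t)))"
proof -
  let ?S = "{0..1} \<inter> ball t (min (r/2) (1/2 - t))"
  have "(\<lambda>s. 2 * s) ` ?S \<subseteq> {0..1} \<inter> ball (2 * t) r"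
    by (auto simp: dist_real_def abs_if split: if_split_asm)
  with assms(1) have "inj_on p ((\<lambda>s. 2 * s) ` ?S)"
    by (rule inj_on_subset)
  then have "inj_on (p \<circ> (\<lambda>s. 2 * s)) ?S"
    by (intro comp_inj_on) (auto simp: inj_on_def)
  moreover have "(p *N q) s = (p \<circ> (\<lambda>s. 2 * s)) s" if "s \<in> ?S" for s
    using that by (auto simp: dist_real_def ncomp_first_half)
  ultimately show ?thesis
    using inj_on_cong by blast
qed

lemma inj_on_ncomp_second_half:
  assumes "inj_on q ({0..1} \<inter> ball (2 * t - 1) r)" "t > 1/2"
  shows "inj_on (p *N q) ({0..1} \<inter> ball t (min (r/2) (t - 1/2)))"
proof -
  let ?S = "{0..1} \<inter> ball t (min (r/2) (t - 1/2))"
  have "(\<lambda>s. 2 * s - 1) ` ?S \<subseteq> {0..1} \<inter> ball (2 * t - 1) r"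
    by (auto simp: dist_real_def abs_if split: if_split_asm)
  with assms(1) have "inj_on q ((\<lambda>s. 2 * s - 1) ` ?S)"
    by (rule inj_on_subset)
  then have "inj_on (q \<circ> (\<lambda>s. 2 * s - 1)) ?S"
    by (intro comp_inj_on) (auto simp: inj_on_def)
  moreover have "(p *N q) s = (q \<circ> (\<lambda>s. 2 * s - 1)) s" if "s \<in> ?S" for s
    using that by (auto simp: dist_real_def ncomp_second_half)
  ultimately show ?thesis
    using inj_on_cong by blast
qed

lemma inj_on_ncomp_junction:
  assumes p: "inj_on p ({0..1} \<inter> ball 1 r)" and q: "inj_on q ({0..1} \<inter> ball 0 r)"
    and junction: "\<And>s s'. s \<in> {0..1} \<Longrightarrow> s' \<in> {0..1} \<Longrightarrow> 1 - r < s \<Longrightarrow> s' < r \<Longrightarrow> p s = q s'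
                     \<Longrightarrow> s = 1 \<and> s' = 0"
  shows "inj_on (p *N q) ({0..1} \<inter> ball (1/2) (r/2))"
proof -
  let ?S = "{0..1} \<inter> ball (1/2) (r/2)"
  have first: "2 * s \<in> {0..1} \<inter> ball 1 r" "1 - r < 2 * s" "(p *N q) s = p (2 * s)"
    if "s \<in> ?S" "s \<le> 1/2" for s
    using that by (auto simp: dist_real_def ncomp_first_half)
  have second: "2 * s - 1 \<in> {0..1} \<inter> ball 0 r" "2 * s - 1 < r" "(p *N q) s = q (2 * s - 1)"
    if "s \<in> ?S" "s > 1/2" for s
    using that by (auto simp: dist_real_def ncomp_second_half)
  have not_across: "(p *N q) x \<noteq> (p *N q) y" if "x \<in> ?S" "y \<in> ?S" "x \<le> 1/2" "y > 1/2" for x y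
    using junction[of "2 * x" "2 * y - 1"] first[OF that(1,3)] second[OF that(2,4)] that(4) by auto
  show ?thesis
  proof (rule inj_onI)
    fix x y assume xy: "x \<in> ?S" "y \<in> ?S" and eq: "(p *N q) x = (p *N q) y"
    consider "x \<le> 1/2" "y \<le> 1/2" | "x > 1/2" "y > 1/2" | "x \<le> 1/2" "y > 1/2" | "x > 1/2" "y \<le> 1/2"
      by linarith
    then show "x = y"
    proof cases
      case 1
      then show ?thesis
        using eq first[OF xy(1)] first[OF xy(2)] inj_onD[OF p] by fastforce
    next
      case 2
      then show ?thesis
        using eq second[OF xy(1)] second[OF xy(2)] inj_onD[OF q] by fastforce
    qed (use not_across xy eq in metis)+
  qed
qed

lemma locally_injective_ncomp:
  assumes p: "locally_injective p" and q: "locally_injective q"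
    and "p 1 = q 0" and meets: "meets_only_at_junction p q"
  shows "locally_injective (p *N q)"
  unfolding locally_injective_iff_ball
proof
  fix t :: real assume "t \<in> {0..1}"
  consider "t < 1/2" | "t > 1/2" | "t = 1/2" by linarith
  then show "\<exists>r>0. inj_on (p *N q) ({0..1} \<inter> ball t r)"
  proof cases
    case 1
    with \<open>t \<in> {0..1}\<close> have "2 * t \<in> {0..1}" by simp
    then obtain r where "r > 0" "inj_on p ({0..1} \<inter> ball (2 * t) r)"
      using p unfolding locally_injective_iff_ball by blast
    with 1 show ?thesis
      by (intro exI[of _ "min (r/2) (1/2 - t)"]) (auto intro: inj_on_ncomp_first_half)
  next
    case 2
    with \<open>t \<in> {0..1}\<close> have "2 * t - 1 \<in> {0..1}" by simp
    then obtain r where "r > 0" "inj_on q ({0..1} \<inter> ball (2 * t - 1) r)"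
      using q unfolding locally_injective_iff_ball by blast
    with 2 show ?thesis
      by (intro exI[of _ "min (r/2) (t - 1/2)"]) (auto intro: inj_on_ncomp_second_half)
  next
    case 3
    obtain r1 r2 where r1: "r1 > 0" "inj_on p ({0..1} \<inter> ball 1 r1)"
      and r2: "r2 > 0" "inj_on q ({0..1} \<inter> ball 0 r2)"
      using p q unfolding locally_injective_iff_ball by (meson atLeastAtMost_iff order_refl zero_le_one)
    obtain e where "e > 0" and junction: "\<And>s s'. s \<in> {0..1} \<Longrightarrow> s' \<in> {0..1}
        \<Longrightarrow> 1 - e < s \<Longrightarrow> s' < e \<Longrightarrow> p s = q s' \<Longrightarrow> s = 1 \<and> s' = 0"
      using meets_only_at_junctionE[OF meets \<open>p 1 = q 0\<close>] by blast
    define r where "r = min (min r1 r2) e"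
    have "r > 0" "inj_on p ({0..1} \<inter> ball 1 r)" "inj_on q ({0..1} \<inter> ball 0 r)"
      using r1 r2 \<open>e > 0\<close> unfolding r_def by (auto elim!: inj_on_subset)
    moreover have "s = 1 \<and> s' = 0"
      if "s \<in> {0..1}" "s' \<in> {0..1}" "1 - r < s" "s' < r" "p s = q s'" for s s'
      using junction[OF that(1,2) _ _ that(5)] that(3,4) unfolding r_def by linarith
    ultimately show ?thesis
      using 3 inj_on_ncomp_junction by (metis half_gt_zero)
  qed
qed

lemma locally_injective_family_gen_paths:
  assumes "locally_injective_family B"
  shows "locally_injective_family (gen_paths B)"
proof -
  have meets: "meets_only_at_junction p q" if "p \<in> gen_paths B" "q \<in> gen_paths B" for p q
    using gen_paths_meets_only_at_junction[OF _ that] assms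
    unfolding locally_injective_family_def by blast
  have "locally_injective p" if "p \<in> gen_paths B" for p
    using that
  proof induction
    case (base p)
    then show ?case using assms unfolding locally_injective_family_def by blast
  next
    case (reparam p \<phi>)
    show ?case by (rule locally_injective_reparam[OF reparam.IH reparam.hyps(2)])
  next
    case (concat p q)
    then show ?case by (simp add: locally_injective_ncomp meets)
  qed
  with meets show ?thesis
    unfolding locally_injective_family_def by blast
qed

section \<open>Transport along injective maps and paths through a cell\<close>

lemma locally_injective_comp_inj_on:
  assumes "locally_injective p" "p ` {0..1} \<subseteq> T" "inj_on h T"
    and "\<And>t. t \<in> {0..1} \<Longrightarrow> r t = h (p t)"
  shows "locally_injective r"
  unfolding locally_injective_def
proof
  fix t :: real assume "t \<in> {0..1}"
  then obtain V where V: "openin (top_of_set {0..1}) V" "t \<in> V" "inj_on p V"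
    using assms(1) unfolding locally_injective_def by blast
  have "V \<subseteq> {0..1}"
    using openin_imp_subset[OF V(1)] .
  have "inj_on r V"
  proof (rule inj_onI)
    fix x y assume "x \<in> V" "y \<in> V" "r x = r y"
    with \<open>V \<subseteq> {0..1}\<close> have "x \<in> {0..1}" "y \<in> {0..1}" by blast+
    with assms(2) have "p x \<in> T" "p y \<in> T" by blast+
    moreover have "h (p x) = h (p y)"
      using assms(4) \<open>x \<in> {0..1}\<close> \<open>y \<in> {0..1}\<close> \<open>r x = r y\<close> by simp
    ultimately have "p x = p y"
      using inj_onD[OF assms(3)] by blast
    with \<open>x \<in> V\<close> \<open>y \<in> V\<close> show "x = y"
      using inj_onD[OF V(3)] by blast
  qed
  with V(1,2) show "\<exists>V. openin (top_of_set {0..1}) V \<and> t \<in> V \<and> inj_on r V"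
    by blast
qed

lemma meets_only_at_junction_comp_inj_on:
  assumes meets: "meets_only_at_junction p q"
    and "p ` {0..1} \<subseteq> T" "q ` {0..1} \<subseteq> T" "inj_on h T"
    and p': "\<And>t. t \<in> {0..1} \<Longrightarrow> p' t = h (p t)" and q': "\<And>t. t \<in> {0..1} \<Longrightarrow> q' t = h (q t)"
  shows "meets_only_at_junction p' q'"
proof (cases "p' 1 = q' 0")
  case True
  have same_iff: "p' s = q' s' \<longleftrightarrow> p s = q s'" if "s \<in> {0..1}" "s' \<in> {0..1}" for s s'
  proof -
    from that assms(2,3) have "p s \<in> T" "q s' \<in> T" by blast+
    then show ?thesis
      using inj_on_eq_iff[OF assms(4)] p'[OF that(1)] q'[OF that(2)] by simp
  qed
  with True have "p 1 = q 0" by simp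
  then obtain e where "e > 0" and junction: "\<And>s s'. s \<in> {0..1} \<Longrightarrow> s' \<in> {0..1}
      \<Longrightarrow> 1 - e < s \<Longrightarrow> s' < e \<Longrightarrow> p s = q s' \<Longrightarrow> s = 1 \<and> s' = 0"
    using meets_only_at_junctionE[OF meets] by blast
  show ?thesis
  proof (rule meets_only_at_junctionI[OF \<open>e > 0\<close>])
    fix s s' assume "s \<in> {0..1}" "s' \<in> {0..1}" "1 - e < s" "s' < e" "p' s = q' s'"
    then show "s = 1 \<and> s' = 0"
      using junction same_iff by blast
  qed
qed (simp add: meets_only_at_junction_def)

text \<open>\<open>A\<close> is the old stage inside the new one and \<open>\<kappa>\<close> reads off the height coordinate of the
  open cell.\<close>

definition cell_path :: "'a set \<Rightarrow> ('a \<Rightarrow> real) \<Rightarrow> (real \<Rightarrow> 'a) \<Rightarrow> bool" where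
  "cell_path A \<kappa> r \<longleftrightarrow> r 0 \<in> A \<and> r 1 \<in> A \<and>
     (\<exists>\<phi>\<in>G11. \<forall>t\<in>{0<..<1}. r t \<notin> A \<and> \<kappa> (r t) = \<phi> t)"

lemma cell_path_outside_iff:
  assumes "cell_path A \<kappa> r" "t \<in> {0..1}"
  shows "r t \<notin> A \<longleftrightarrow> t \<in> {0<..<1}"
proof -
  have "t \<in> {0<..<1} \<or> t = 0 \<or> t = 1"
    using assms(2) by fastforce
  then show ?thesis
    using assms(1) unfolding cell_path_def by auto
qed

lemma cell_pathE:
  assumes "cell_path A \<kappa> r"
  obtains \<phi> where "\<phi> \<in> G11" "\<And>t. t \<in> {0<..<1} \<Longrightarrow> \<kappa> (r t) = \<phi> t"
  using assms unfolding cell_path_def by blast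

lemma cell_path_locally_injective:
  assumes "cell_path A \<kappa> r"
  shows "locally_injective r"
  unfolding locally_injective_iff_ball
proof (intro ballI exI conjI)
  obtain \<phi> where "\<phi> \<in> G11" and height: "\<And>t. t \<in> {0<..<1} \<Longrightarrow> \<kappa> (r t) = \<phi> t"
    using cell_pathE[OF assms] by blast
  fix t :: real
  show "inj_on r ({0..1} \<inter> ball t (1/2))"
  proof (rule inj_onI)
    fix x y assume x: "x \<in> {0..1} \<inter> ball t (1/2)" and y: "y \<in> {0..1} \<inter> ball t (1/2)"
      and "r x = r y"
    then have side: "x \<in> {0<..<1} \<longleftrightarrow> y \<in> {0<..<1}"
      using cell_path_outside_iff[OF assms] by (metis IntD1)
    show "x = y"
    proof (cases "x \<in> {0<..<1}")
      case True
      with side have "y \<in> {0<..<1}" by blast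
      with True \<open>r x = r y\<close> have "\<phi> x = \<phi> y"
        using height by metis
      with True \<open>y \<in> {0<..<1}\<close> show ?thesis
        using inj_onD[OF G11D(3)[OF \<open>\<phi> \<in> G11\<close>]] by auto
    next
      case False
      with side x y have "x \<in> {0, 1}" "y \<in> {0, 1}" by auto
      moreover have "\<bar>x - y\<bar> < 1"
        using x y by (auto simp: dist_real_def abs_if split: if_split_asm)
      ultimately show ?thesis by auto
    qed
  qed
qed simp

lemma meets_only_at_junction_cell_cell:
  assumes p: "cell_path A \<kappa> p" and q: "cell_path A \<kappa> q"
  shows "meets_only_at_junction p q"
proof -
  obtain \<phi> where "\<phi> \<in> G11" and p_height: "\<And>t. t \<in> {0<..<1} \<Longrightarrow> \<kappa> (p t) = \<phi> t"
    using cell_pathE[OF p] by blast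
  obtain \<psi> where "\<psi> \<in> G11" and q_height: "\<And>t. t \<in> {0<..<1} \<Longrightarrow> \<kappa> (q t) = \<psi> t"
    using cell_pathE[OF q] by blast
  obtain d1 where "d1 > 0" and d1: "\<And>s. s \<in> {0..1} \<Longrightarrow> 1 - d1 < s \<Longrightarrow> 1/2 < \<phi> s"
    using G11_near_1[OF \<open>\<phi> \<in> G11\<close>, of "1/2"] by auto
  obtain d2 where "d2 > 0" and d2: "\<And>s. s \<in> {0..1} \<Longrightarrow> s < d2 \<Longrightarrow> \<psi> s < 1/2"
    using G11_near_0[OF \<open>\<psi> \<in> G11\<close>, of "1/2"] by auto
  show ?thesis
  proof (rule meets_only_at_junctionI)
    show "min (1/2) (min d1 d2) > 0" using \<open>d1 > 0\<close> \<open>d2 > 0\<close> by simp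
    fix s s' assume s: "s \<in> {0..1}" "s' \<in> {0..1}" "1 - min (1/2) (min d1 d2) < s"
      "s' < min (1/2) (min d1 d2)" and "p s = q s'"
    then have "s \<in> {0<..<1} \<longleftrightarrow> s' \<in> {0<..<1}"
      using cell_path_outside_iff[OF p s(1)] cell_path_outside_iff[OF q s(2)] by simp
    moreover have "s \<notin> {0<..<1}"
    proof
      assume "s \<in> {0<..<1}"
      with \<open>s \<in> {0<..<1} \<longleftrightarrow> s' \<in> {0<..<1}\<close> have "\<phi> s = \<psi> s'"
        using p_height q_height \<open>p s = q s'\<close> by metis
      moreover have "1/2 < \<phi> s" "\<psi> s' < 1/2" using d1 d2 s by auto
      ultimately show False by simp
    qed
    ultimately show "s = 1 \<and> s' = 0"
      using s by auto
  qed
qed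

lemma meets_only_at_junction_subspace_cell:
  assumes p: "p ` {0..1} \<subseteq> A" "locally_injective p" and q: "cell_path A \<kappa> q"
  shows "meets_only_at_junction p q"
proof (cases "p 1 = q 0")
  case True
  obtain \<rho> where "\<rho> > 0" and inj: "inj_on p ({0..1} \<inter> ball 1 \<rho>)"
    using p(2) unfolding locally_injective_iff_ball by (meson atLeastAtMost_iff order_refl zero_le_one)
  show ?thesis
  proof (rule meets_only_at_junctionI)
    show "min (1/2) \<rho> > 0" using \<open>\<rho> > 0\<close> by simp
    fix s s' assume s: "s \<in> {0..1}" "s' \<in> {0..1}" "1 - min (1/2) \<rho> < s" "s' < min (1/2) \<rho>"
      and "p s = q s'"
    then have "q s' \<in> A" using p(1) by (metis image_subset_iff)
    then have "s' = 0" using cell_path_outside_iff[OF q s(2)] s(2,4) by auto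
    then have "p s = p 1" using True \<open>p s = q s'\<close> by simp
    moreover have "s \<in> {0..1} \<inter> ball 1 \<rho>" "(1::real) \<in> {0..1} \<inter> ball 1 \<rho>"
      using s \<open>\<rho> > 0\<close> by (auto simp: dist_real_def)
    ultimately have "s = 1" by (rule inj_onD[OF inj])
    with \<open>s' = 0\<close> show "s = 1 \<and> s' = 0" by simp
  qed
qed (simp add: meets_only_at_junction_def)

lemma meets_only_at_junction_cell_subspace:
  assumes p: "cell_path A \<kappa> p" and q: "q ` {0..1} \<subseteq> A" "locally_injective q"
  shows "meets_only_at_junction p q"
proof (cases "p 1 = q 0")
  case True
  obtain \<rho> where "\<rho> > 0" and inj: "inj_on q ({0..1} \<inter> ball 0 \<rho>)"
    using q(2) unfolding locally_injective_iff_ball by (meson atLeastAtMost_iff order_refl zero_le_one)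
  show ?thesis
  proof (rule meets_only_at_junctionI)
    show "min (1/2) \<rho> > 0" using \<open>\<rho> > 0\<close> by simp
    fix s s' assume s: "s \<in> {0..1}" "s' \<in> {0..1}" "1 - min (1/2) \<rho> < s" "s' < min (1/2) \<rho>"
      and "p s = q s'"
    then have "p s \<in> A" using q(1) by (metis image_subset_iff)
    then have "s = 1" using cell_path_outside_iff[OF p s(1)] s(1,3) by auto
    then have "q s' = q 0" using True \<open>p s = q s'\<close> by simp
    moreover have "s' \<in> {0..1} \<inter> ball 0 \<rho>" "(0::real) \<in> {0..1} \<inter> ball 0 \<rho>"
      using s \<open>\<rho> > 0\<close> by (auto simp: dist_real_def)
    ultimately have "s' = 0" by (rule inj_onD[OF inj])
    with \<open>s = 1\<close> show "s = 1 \<and> s' = 0" by simp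
  qed
qed (simp add: meets_only_at_junction_def)

section \<open>Attaching a globular cell\<close>

lemma topspace_glob_topology: "topspace (glob_topology Z) = glob_carrier Z"
proof -
  define pre where "pre U = {(z, t). z \<in> topspace Z \<and> t \<in> {0..1} \<and> glob_q z t \<in> U}" for U
  define P where
    "P U \<longleftrightarrow> U \<subseteq> glob_carrier Z \<and> openin (prod_topology Z (top_of_set {0..1})) (pre U)" for U
  have "istopology P"
    unfolding istopology_def
  proof (intro conjI allI impI)
    fix S T assume "P S" "P T"
    moreover have "pre (S \<inter> T) = pre S \<inter> pre T"
      unfolding pre_def by auto
    ultimately show "P (S \<inter> T)"
      unfolding P_def by auto
  next
    fix \<K> assume "\<forall>K\<in>\<K>. P K"
    moreover have "pre (\<Union>\<K>) = \<Union> (pre ` \<K>)"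
      unfolding pre_def by auto
    ultimately show "P (\<Union>\<K>)"
      unfolding P_def by (auto intro: openin_Union)
  qed
  then have opens: "openin (glob_topology Z) = P"
    unfolding glob_topology_def P_def pre_def by simp
  have pre_carrier: "pre (glob_carrier Z) = topspace (prod_topology Z (top_of_set {0..1}))"
    unfolding pre_def glob_q_def glob_carrier_def by auto
  have "P (glob_carrier Z)"
    unfolding P_def pre_carrier by (simp only: openin_topspace subset_refl simp_thms)
  then show ?thesis
    unfolding topspace_def opens by (auto simp: P_def)
qed

lemma topspace_Glob: "topspace (space (Glob Z)) = glob_carrier Z"
  by (simp add: Glob_def topspace_glob_topology)

lemma paths_Glob: "paths (Glob Z) = {(\<lambda>t. glob_q z (\<phi> t)) | z \<phi>. z \<in> topspace Z \<and> \<phi> \<in> G11}"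
  by (simp add: Glob_def)

lemma mdspace_path_image:
  assumes "mdspace X" "p \<in> paths X"
  shows "p ` {0..1} \<subseteq> topspace (space X)"
  using assms continuous_map_image_subset_topspace unfolding mdspace_def by fastforce

lemma mdmap_topspace:
  assumes "mdmap X Y f" "x \<in> topspace (space X)"
  shows "f x \<in> topspace (space Y)"
  using assms continuous_map_image_subset_topspace unfolding mdmap_def by blast

lemma cell_pushoutD:
  assumes "cell_pushout X n a Y h g"
  shows "mdmap (Glob (sphere_m1 n)) X a"
    and "\<And>b. b \<in> glob_carrier (sphere_m1 n) \<Longrightarrow> g b = h (a b)"
    and "inj_on h (topspace (space X))"
    and "inj_on g (glob_carrier (disk n) - glob_carrier (sphere_m1 n))"
    and "h ` topspace (space X) \<inter> g ` (glob_carrier (disk n) - glob_carrier (sphere_m1 n)) = {}"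
    and "paths Y = gen_paths ((\<lambda>p. h \<circ> p) ` paths X \<union> (\<lambda>p. g \<circ> p) ` paths (Glob (disk n)))"
  using assms unfolding cell_pushout_def Let_def topspace_Glob by (elim conjE; simp)+

fun glob_height :: "gpt \<Rightarrow> real" where
  "glob_height (GM z t) = t"
| "glob_height _ = 0"

lemma G11_interior:
  assumes "\<phi> \<in> G11" "t \<in> {0<..<1}"
  shows "\<phi> t \<in> {0<..<1}"
proof -
  have t: "t \<in> {0..1}" "t \<noteq> 0" "t \<noteq> 1"
    using assms(2) by auto
  then have "\<phi> t \<noteq> 0" "\<phi> t \<noteq> 1"
    using G11_endpoint_iff[OF assms(1) t(1)] by simp_all
  with G11_mem_unit_interval[OF assms(1) t(1)] show ?thesis
    by auto
qed

lemma glob_q_mem_carrier: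
  assumes "z \<in> topspace Z" "t \<in> {0..1}"
  shows "glob_q z t \<in> glob_carrier Z"
  using assms by (auto simp: glob_q_def glob_carrier_def)

lemma cell_pushout_boundary_path:
  assumes po: "cell_pushout X n a Y h g"
    and "z \<in> topspace (sphere_m1 n)" "\<phi> \<in> G11"
  shows "\<exists>p\<in>paths X. \<forall>t\<in>{0..1}. g (glob_q z (\<phi> t)) = h (p t)"
proof
  have "(\<lambda>t. glob_q z (\<phi> t)) \<in> paths (Glob (sphere_m1 n))"
    unfolding paths_Glob using assms(2,3) by (intro CollectI exI[of _ z] exI[of _ \<phi>]) simp
  then show "a \<circ> (\<lambda>t. glob_q z (\<phi> t)) \<in> paths X"
    using cell_pushoutD(1)[OF po] unfolding mdmap_def by blast
  show "\<forall>t\<in>{0..1}. g (glob_q z (\<phi> t)) = h ((a \<circ> (\<lambda>t. glob_q z (\<phi> t))) t)"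
  proof
    fix t :: real assume "t \<in> {0..1}"
    then have "glob_q z (\<phi> t) \<in> glob_carrier (sphere_m1 n)"
      using glob_q_mem_carrier[OF assms(2) G11_mem_unit_interval[OF assms(3)]] by blast
    then show "g (glob_q z (\<phi> t)) = h ((a \<circ> (\<lambda>t. glob_q z (\<phi> t))) t)"
      using cell_pushoutD(2)[OF po] by simp
  qed
qed

lemma cell_pushout_cell_path:
  assumes po: "cell_pushout X n a Y h g"
    and z: "z \<in> topspace (disk n)" "z \<notin> topspace (sphere_m1 n)" and \<phi>: "\<phi> \<in> G11"
  defines "cell \<equiv> glob_carrier (disk n) - glob_carrier (sphere_m1 n)"
  shows "cell_path (h ` topspace (space X)) (glob_height \<circ> inv_into cell g)
           (\<lambda>t. g (glob_q z (\<phi> t)))"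
  unfolding cell_path_def
proof (intro conjI bexI[of _ \<phi>] ballI)
  have boundary: "G0 \<in> glob_carrier (sphere_m1 n)" "G1 \<in> glob_carrier (sphere_m1 n)"
    unfolding glob_carrier_def by auto
  then have "a G0 \<in> topspace (space X)" "a G1 \<in> topspace (space X)"
    using mdmap_topspace[OF cell_pushoutD(1)[OF po]] unfolding topspace_Glob by blast+
  moreover have "glob_q z (\<phi> 0) = G0" "glob_q z (\<phi> 1) = G1"
    using G11D(4,5)[OF \<phi>] by (simp_all add: glob_q_def)
  ultimately show "g (glob_q z (\<phi> 0)) \<in> h ` topspace (space X)"
    "g (glob_q z (\<phi> 1)) \<in> h ` topspace (space X)"
    using cell_pushoutD(2)[OF po boundary(1)] cell_pushoutD(2)[OF po boundary(2)] by simp_all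
  fix t :: real assume "t \<in> {0<..<1}"
  then have t: "0 < \<phi> t" "\<phi> t < 1"
    using G11_interior[OF \<phi>] by auto
  then have in_cell: "glob_q z (\<phi> t) = GM z (\<phi> t)" "GM z (\<phi> t) \<in> cell"
    using z unfolding cell_def glob_q_def glob_carrier_def by simp_all
  then show "g (glob_q z (\<phi> t)) \<notin> h ` topspace (space X)"
    using cell_pushoutD(5)[OF po] unfolding cell_def disjoint_iff by auto
  have "inv_into cell g (g (GM z (\<phi> t))) = GM z (\<phi> t)"
    using cell_pushoutD(4)[OF po] in_cell(2) unfolding cell_def by (rule inv_into_f_f)
  with in_cell(1) show "(glob_height \<circ> inv_into cell g) (g (glob_q z (\<phi> t))) = \<phi> t"
    by simp
qed (rule \<phi>)

lemma cell_pushout_generator_cases: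
  assumes po: "cell_pushout X n a Y h g"
  obtains \<kappa> where "\<And>r. r \<in> (\<lambda>p. h \<circ> p) ` paths X \<union> (\<lambda>p. g \<circ> p) ` paths (Glob (disk n)) \<Longrightarrow>
      (\<exists>p\<in>paths X. \<forall>t\<in>{0..1}. r t = h (p t)) \<or> cell_path (h ` topspace (space X)) \<kappa> r"
proof
  fix r assume "r \<in> (\<lambda>p. h \<circ> p) ` paths X \<union> (\<lambda>p. g \<circ> p) ` paths (Glob (disk n))"
  then consider (subspace) p where "p \<in> paths X" "r = h \<circ> p"
    | (glob) p where "p \<in> paths (Glob (disk n))" "r = g \<circ> p"
    by blast
  then show "(\<exists>p\<in>paths X. \<forall>t\<in>{0..1}. r t = h (p t)) \<or>
      cell_path (h ` topspace (space X))
        (glob_height \<circ> inv_into (glob_carrier (disk n) - glob_carrier (sphere_m1 n)) g) r"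
  proof cases
    case subspace
    then show ?thesis by auto
  next
    case glob
    obtain z \<phi> where z: "z \<in> topspace (disk n)" and "\<phi> \<in> G11"
      and "p = (\<lambda>t. glob_q z (\<phi> t))"
      using glob(1) unfolding paths_Glob by blast
    with glob(2) have r: "r = (\<lambda>t. g (glob_q z (\<phi> t)))"
      by (simp add: comp_def)
    show ?thesis
    proof (cases "z \<in> topspace (sphere_m1 n)")
      case True
      then show ?thesis
        using cell_pushout_boundary_path[OF po True \<open>\<phi> \<in> G11\<close>] r by simp
    next
      case False
      then show ?thesis
        using cell_pushout_cell_path[OF po z False \<open>\<phi> \<in> G11\<close>] r by simp
    qed
  qed
qed

lemma locally_injective_family_subspace_or_cell:
  assumes family: "locally_injective_family P" and image: "\<And>p. p \<in> P \<Longrightarrow> p ` {0..1} \<subseteq> T"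
    and inj_h: "inj_on h T"
    and cases: "\<And>r. r \<in> B \<Longrightarrow> (\<exists>p\<in>P. \<forall>t\<in>{0..1}. r t = h (p t)) \<or> cell_path (h ` T) \<kappa> r"
  shows "locally_injective_family B"
proof -
  have family_li: "locally_injective p" and family_meets: "meets_only_at_junction p q"
    if "p \<in> P" "q \<in> P" for p q
    using family that unfolding locally_injective_family_def by blast+
  have sub_image: "r ` {0..1} \<subseteq> h ` T" and sub_li: "locally_injective r"
    if "p \<in> P" "\<forall>t\<in>{0..1}. r t = h (p t)" for p r
  proof -
    show "r ` {0..1} \<subseteq> h ` T"
      using that(2) image[OF that(1)] by auto
    show "locally_injective r"
      by (rule locally_injective_comp_inj_on[OF family_li[OF that(1,1)] image[OF that(1)] inj_h
            that(2)[rule_format]])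
  qed
  have sub_meets: "meets_only_at_junction r r'"
    if "p \<in> P" "\<forall>t\<in>{0..1}. r t = h (p t)" "r' \<in> B" for p r r'
    using cases[OF that(3)]
  proof
    assume "\<exists>p'\<in>P. \<forall>t\<in>{0..1}. r' t = h (p' t)"
    then obtain p' where p': "p' \<in> P" "\<forall>t\<in>{0..1}. r' t = h (p' t)" by blast
    show ?thesis
      by (rule meets_only_at_junction_comp_inj_on[OF family_meets[OF that(1) p'(1)]
            image[OF that(1)] image[OF p'(1)] inj_h that(2)[rule_format] p'(2)[rule_format]])
  next
    assume "cell_path (h ` T) \<kappa> r'"
    then show ?thesis
      by (rule meets_only_at_junction_subspace_cell[OF sub_image[OF that(1,2)] sub_li[OF that(1,2)]])
  qed
  have cell_meets: "meets_only_at_junction r r'" if "cell_path (h ` T) \<kappa> r" "r' \<in> B" for r r'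
    using cases[OF that(2)]
  proof
    assume "\<exists>p'\<in>P. \<forall>t\<in>{0..1}. r' t = h (p' t)"
    then obtain p' where p': "p' \<in> P" "\<forall>t\<in>{0..1}. r' t = h (p' t)" by blast
    show ?thesis
      by (rule meets_only_at_junction_cell_subspace[OF that(1) sub_image[OF p'] sub_li[OF p']])
  next
    assume "cell_path (h ` T) \<kappa> r'"
    then show ?thesis
      by (rule meets_only_at_junction_cell_cell[OF that(1)])
  qed
  show ?thesis
    unfolding locally_injective_family_def
  proof (intro conjI ballI)
    fix r assume "r \<in> B"
    then show "locally_injective r"
      using cases sub_li cell_path_locally_injective by blast
  next
    fix r r' assume "r \<in> B" "r' \<in> B"
    then show "meets_only_at_junction r r'"
      using cases sub_meets cell_meets by blast
  qed
qed

lemma cell_pushout_locally_injective_family: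
  assumes po: "cell_pushout X n a Y h g"
    and "mdspace X" and "locally_injective_family (paths X)"
  shows "locally_injective_family (paths Y)"
proof -
  obtain \<kappa> where "\<And>r. r \<in> (\<lambda>p. h \<circ> p) ` paths X \<union> (\<lambda>p. g \<circ> p) ` paths (Glob (disk n)) \<Longrightarrow>
      (\<exists>p\<in>paths X. \<forall>t\<in>{0..1}. r t = h (p t)) \<or> cell_path (h ` topspace (space X)) \<kappa> r"
    using cell_pushout_generator_cases[OF po] by blast
  then have "locally_injective_family
      ((\<lambda>p. h \<circ> p) ` paths X \<union> (\<lambda>p. g \<circ> p) ` paths (Glob (disk n)))"
    using locally_injective_family_subspace_or_cell[OF assms(3) mdspace_path_image[OF assms(2)]
        cell_pushoutD(3)[OF po]] by blast
  then show ?thesis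
    unfolding cell_pushoutD(6)[OF po] by (rule locally_injective_family_gen_paths)
qed

section \<open>Colimits of chains\<close>

lemma chain_colimit_eq_iff:
  assumes "chain_colimit \<nu> X f Y c" "\<mu> < \<nu>" "\<rho> < \<nu>"
    and "x \<in> topspace (space (X \<mu>))" "y \<in> topspace (space (X \<rho>))"
  shows "c \<mu> x = c \<rho> y \<longleftrightarrow> (\<exists>\<sigma>. \<mu> \<le> \<sigma> \<and> \<rho> \<le> \<sigma> \<and> \<sigma> < \<nu> \<and> f \<mu> \<sigma> x = f \<rho> \<sigma> y)"
proof -
  have "\<forall>\<mu><\<nu>. \<forall>\<rho><\<nu>. \<forall>x\<in>topspace (space (X \<mu>)). \<forall>y\<in>topspace (space (X \<rho>)).
      c \<mu> x = c \<rho> y \<longleftrightarrow> (\<exists>\<sigma>. \<mu> \<le> \<sigma> \<and> \<rho> \<le> \<sigma> \<and> \<sigma> < \<nu> \<and> f \<mu> \<sigma> x = f \<rho> \<sigma> y)"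
    using assms(1) unfolding chain_colimit_def by (elim conjE) assumption
  from this[rule_format, OF assms(2-5)] show ?thesis .
qed

lemma chain_colimit_paths:
  assumes "chain_colimit \<nu> X f Y c"
  shows "paths Y = gen_paths (\<Union>\<mu>\<in>{..<\<nu>}. (\<lambda>p. c \<mu> \<circ> p) ` paths (X \<mu>))"
  using assms unfolding chain_colimit_def by (elim conjE) assumption

lemma chain_colimit_inj_on:
  assumes cc: "chain_colimit \<nu> X f Y c" and "\<mu> < \<nu>"
    and inj: "\<And>\<sigma>. \<mu> \<le> \<sigma> \<Longrightarrow> \<sigma> < \<nu> \<Longrightarrow> inj_on (f \<mu> \<sigma>) (topspace (space (X \<mu>)))"
  shows "inj_on (c \<mu>) (topspace (space (X \<mu>)))"
proof (rule inj_onI)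
  fix x y assume xy: "x \<in> topspace (space (X \<mu>))" "y \<in> topspace (space (X \<mu>))" "c \<mu> x = c \<mu> y"
  then obtain \<sigma> where \<sigma>: "\<mu> \<le> \<sigma>" "\<sigma> < \<nu>" and "f \<mu> \<sigma> x = f \<mu> \<sigma> y"
    using chain_colimit_eq_iff[OF cc \<open>\<mu> < \<nu>\<close> \<open>\<mu> < \<nu>\<close> xy(1,2)] by blast
  then show "x = y"
    using inj_onD[OF inj[OF \<sigma>] _ xy(1,2)] by blast
qed

lemma chain_colimit_compatible:
  assumes cc: "chain_colimit \<nu> X f Y c" and "\<mu> \<le> \<sigma>" "\<sigma> < \<nu>"
    and "mdmap (X \<mu>) (X \<sigma>) (f \<mu> \<sigma>)" "x \<in> topspace (space (X \<mu>))"
    and ident: "\<And>y. y \<in> topspace (space (X \<sigma>)) \<Longrightarrow> f \<sigma> \<sigma> y = y"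
  shows "c \<mu> x = c \<sigma> (f \<mu> \<sigma> x)"
proof -
  have y: "f \<mu> \<sigma> x \<in> topspace (space (X \<sigma>))"
    using mdmap_topspace[OF assms(4,5)] .
  have "\<mu> < \<nu>"
    using assms(2,3) by simp
  show ?thesis
    unfolding chain_colimit_eq_iff[OF cc \<open>\<mu> < \<nu>\<close> \<open>\<sigma> < \<nu>\<close> assms(5) y]
    by (intro exI[of _ \<sigma>]) (simp add: assms(2,3) ident[OF y])
qed

lemma chain_colimit_locally_injective_family:
  assumes cc: "chain_colimit \<nu> X f Y c"
    and md: "\<And>\<mu>. \<mu> < \<nu> \<Longrightarrow> mdspace (X \<mu>)"
    and family: "\<And>\<mu>. \<mu> < \<nu> \<Longrightarrow> locally_injective_family (paths (X \<mu>))"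
    and maps: "\<And>\<mu> \<sigma>. \<mu> \<le> \<sigma> \<Longrightarrow> \<sigma> < \<nu> \<Longrightarrow> mdmap (X \<mu>) (X \<sigma>) (f \<mu> \<sigma>)"
    and inj: "\<And>\<mu> \<sigma>. \<mu> \<le> \<sigma> \<Longrightarrow> \<sigma> < \<nu> \<Longrightarrow> inj_on (f \<mu> \<sigma>) (topspace (space (X \<mu>)))"
    and ident: "\<And>\<sigma> y. \<sigma> < \<nu> \<Longrightarrow> y \<in> topspace (space (X \<sigma>)) \<Longrightarrow> f \<sigma> \<sigma> y = y"
  shows "locally_injective_family (paths Y)"
proof -
  let ?B = "\<Union>\<mu>\<in>{..<\<nu>}. (\<lambda>p. c \<mu> \<circ> p) ` paths (X \<mu>)"
  have inj_c: "inj_on (c \<mu>) (topspace (space (X \<mu>)))" if "\<mu> < \<nu>" for \<mu>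
    using chain_colimit_inj_on[OF cc that inj] .
  have image: "p ` {0..1} \<subseteq> topspace (space (X \<mu>))" if "\<mu> < \<nu>" "p \<in> paths (X \<mu>)" for \<mu> p
    using mdspace_path_image[OF md[OF that(1)] that(2)] .
  have li: "locally_injective b" if "b \<in> ?B" for b
  proof -
    from that obtain \<mu> p where mp: "\<mu> < \<nu>" "p \<in> paths (X \<mu>)" "b = c \<mu> \<circ> p"
      by blast
    moreover have "locally_injective p"
      using family[OF mp(1)] mp(2) unfolding locally_injective_family_def by blast
    then show ?thesis
      by (rule locally_injective_comp_inj_on[OF _ image[OF mp(1,2)] inj_c[OF mp(1)]])
        (simp add: mp(3))
  qed
  have meets: "meets_only_at_junction b b'" if "b \<in> ?B" "b' \<in> ?B" for b b'
  proof -
    from that obtain \<mu> p \<mu>' p' where "\<mu> < \<nu>" "p \<in> paths (X \<mu>)" "b = c \<mu> \<circ> p"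
      and "\<mu>' < \<nu>" "p' \<in> paths (X \<mu>')" "b' = c \<mu>' \<circ> p'"
      by blast
    define \<sigma> where "\<sigma> = max \<mu> \<mu>'"
    have \<sigma>: "\<mu> \<le> \<sigma>" "\<mu>' \<le> \<sigma>" "\<sigma> < \<nu>"
      using \<open>\<mu> < \<nu>\<close> \<open>\<mu>' < \<nu>\<close> unfolding \<sigma>_def by simp_all
    have moved: "f \<mu> \<sigma> \<circ> p \<in> paths (X \<sigma>)" "f \<mu>' \<sigma> \<circ> p' \<in> paths (X \<sigma>)"
      using maps[OF \<sigma>(1,3)] maps[OF \<sigma>(2,3)] \<open>p \<in> paths (X \<mu>)\<close> \<open>p' \<in> paths (X \<mu>')\<close>
      unfolding mdmap_def by blast+
    then have "meets_only_at_junction (f \<mu> \<sigma> \<circ> p) (f \<mu>' \<sigma> \<circ> p')"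
      using family[OF \<sigma>(3)] unfolding locally_injective_family_def by blast
    moreover have "b t = c \<sigma> ((f \<mu> \<sigma> \<circ> p) t)" "b' t = c \<sigma> ((f \<mu>' \<sigma> \<circ> p') t)"
      if "t \<in> {0..1}" for t
    proof -
      have pt: "p t \<in> topspace (space (X \<mu>))" "p' t \<in> topspace (space (X \<mu>'))"
        using image[OF \<open>\<mu> < \<nu>\<close> \<open>p \<in> paths (X \<mu>)\<close>] image[OF \<open>\<mu>' < \<nu>\<close> \<open>p' \<in> paths (X \<mu>')\<close>]
          that by blast+
      show "b t = c \<sigma> ((f \<mu> \<sigma> \<circ> p) t)"
        using chain_colimit_compatible[OF cc \<sigma>(1,3) maps[OF \<sigma>(1,3)] pt(1) ident[OF \<sigma>(3)]]
          \<open>b = c \<mu> \<circ> p\<close> by simp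
      show "b' t = c \<sigma> ((f \<mu>' \<sigma> \<circ> p') t)"
        using chain_colimit_compatible[OF cc \<sigma>(2,3) maps[OF \<sigma>(2,3)] pt(2) ident[OF \<sigma>(3)]]
          \<open>b' = c \<mu>' \<circ> p'\<close> by simp
    qed
    ultimately show ?thesis
      by (rule meets_only_at_junction_comp_inj_on[OF _ image[OF \<sigma>(3) moved(1)]
          image[OF \<sigma>(3) moved(2)] inj_c[OF \<sigma>(3)]])
  qed
  have "locally_injective_family ?B"
    unfolding locally_injective_family_def
  proof (intro conjI ballI)
    show "locally_injective b" if "b \<in> ?B" for b
      using li[OF that] .
    show "meets_only_at_junction b b'" if "b \<in> ?B" "b' \<in> ?B" for b b'
      using meets[OF that] .
  qed
  then show ?thesis
    unfolding chain_colimit_paths[OF cc] by (rule locally_injective_family_gen_paths)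
qed

section \<open>Cellular towers\<close>

locale cellular_tower_maps =
  fixes lam :: "'o::wellorder" and X :: "'o \<Rightarrow> 'a mdspace" and f :: "'o \<Rightarrow> 'o \<Rightarrow> 'a \<Rightarrow> 'a"
  assumes mdspace: "\<forall>\<nu>\<le>lam. mdspace (X \<nu>)"
    and maps: "\<forall>\<nu> \<mu>. \<nu> \<le> \<mu> \<and> \<mu> \<le> lam \<longrightarrow> mdmap (X \<nu>) (X \<mu>) (f \<nu> \<mu>)"
    and ident: "\<forall>\<nu>\<le>lam. \<forall>x\<in>topspace (space (X \<nu>)). f \<nu> \<nu> x = x"
    and trans: "\<forall>\<nu> \<mu> \<rho>. \<nu> \<le> \<mu> \<and> \<mu> \<le> \<rho> \<and> \<rho> \<le> lam \<longrightarrow>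
            (\<forall>x\<in>topspace (space (X \<nu>)). f \<mu> \<rho> (f \<nu> \<mu> x) = f \<nu> \<rho> x)"
    and initial: "\<forall>\<nu>\<le>lam. \<not> (\<exists>\<mu>. \<mu> < \<nu>) \<longrightarrow>
            X \<nu> = \<lparr> space = discrete_topology (states (X \<nu>)), states = states (X \<nu>), paths = {} \<rparr>"
    and successor: "\<forall>\<nu> \<nu>'. \<nu>' \<le> lam \<and> is_succ \<nu>' \<nu> \<longrightarrow>
            (\<exists>n a g. cell_pushout (X \<nu>) n a (X \<nu>') (f \<nu> \<nu>') g)"
    and limit: "\<forall>\<nu>\<le>lam. is_limit \<nu> \<longrightarrow> chain_colimit \<nu> X f (X \<nu>) (\<lambda>\<mu>. f \<mu> \<nu>)"

lemma cellular_tower_iff: "cellular_tower lam X \<longleftrightarrow> (\<exists>f. cellular_tower_maps lam X f)"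
  unfolding cellular_tower_def cellular_tower_maps_def by (simp only: conj_assoc)

context cellular_tower_maps
begin

lemma inj_on_transition_refl:
  assumes "\<nu> \<le> lam"
  shows "inj_on (f \<nu> \<nu>) (topspace (space (X \<nu>)))"
  using ident assms by (simp add: inj_on_def)

lemma inj_on_transition_trans:
  assumes "\<mu> \<le> \<nu>" "\<nu> \<le> \<rho>" "\<rho> \<le> lam"
    and "inj_on (f \<mu> \<nu>) (topspace (space (X \<mu>)))" "inj_on (f \<nu> \<rho>) (topspace (space (X \<nu>)))"
  shows "inj_on (f \<mu> \<rho>) (topspace (space (X \<mu>)))"
proof -
  have "f \<mu> \<nu> ` topspace (space (X \<mu>)) \<subseteq> topspace (space (X \<nu>))"
    using maps assms(1-3) mdmap_topspace by (meson image_subsetI order.trans)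
  then have "inj_on (f \<nu> \<rho> \<circ> f \<mu> \<nu>) (topspace (space (X \<mu>)))"
    using assms(4,5) by (blast intro: comp_inj_on inj_on_subset)
  moreover have "\<forall>x\<in>topspace (space (X \<mu>)). f \<nu> \<rho> (f \<mu> \<nu> x) = f \<mu> \<rho> x"
    using trans assms(1-3) by blast
  ultimately show ?thesis
    by (simp add: inj_on_def)
qed

definition injective_stage :: "'o \<Rightarrow> bool" where
  "injective_stage \<nu> \<longleftrightarrow> (\<forall>\<mu>\<le>\<nu>. inj_on (f \<mu> \<nu>) (topspace (space (X \<mu>))))
     \<and> locally_injective_family (paths (X \<nu>))"

lemma injective_stage_initial:
  assumes "\<nu> \<le> lam" "\<not> (\<exists>\<mu>. \<mu> < \<nu>)"
  shows "injective_stage \<nu>"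
proof -
  have "paths (X \<nu>) = {}"
    using initial assms by (metis (no_types, lifting) mdspace.select_convs(3))
  moreover have "\<mu> = \<nu>" if "\<mu> \<le> \<nu>" for \<mu>
    using that assms(2) by (simp add: le_less)
  ultimately show ?thesis
    using inj_on_transition_refl[OF assms(1)]
    unfolding injective_stage_def locally_injective_family_def by auto
qed

lemma injective_stage_successor:
  assumes "\<nu> \<le> lam" "is_succ \<nu> \<nu>0" and "injective_stage \<nu>0"
  shows "injective_stage \<nu>"
proof -
  have "\<nu>0 < \<nu>" and no_between: "\<And>\<mu>. \<mu> < \<nu> \<Longrightarrow> \<mu> \<le> \<nu>0"
    using assms(2) unfolding is_succ_def by (auto simp: not_less[symmetric])
  obtain n a g where po: "cell_pushout (X \<nu>0) n a (X \<nu>) (f \<nu>0 \<nu>) g"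
    using successor assms(1,2) by blast
  have "locally_injective_family (paths (X \<nu>))"
    using cell_pushout_locally_injective_family[OF po] mdspace assms(1,3) \<open>\<nu>0 < \<nu>\<close>
    unfolding injective_stage_def by simp
  moreover have "inj_on (f \<mu> \<nu>) (topspace (space (X \<mu>)))" if "\<mu> \<le> \<nu>" for \<mu>
  proof (cases "\<mu> = \<nu>")
    case True
    then show ?thesis using inj_on_transition_refl[OF assms(1)] by simp
  next
    case False
    with that have "\<mu> \<le> \<nu>0" using no_between by simp
    then show ?thesis
      using inj_on_transition_trans[OF _ _ assms(1)] cell_pushoutD(3)[OF po] assms(3) \<open>\<nu>0 < \<nu>\<close>
      unfolding injective_stage_def by simp
  qed
  ultimately show ?thesis
    unfolding injective_stage_def by blast
qed

lemma injective_stage_limit: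
  assumes "\<nu> \<le> lam" "is_limit \<nu>" and IH: "\<And>\<mu>. \<mu> < \<nu> \<Longrightarrow> injective_stage \<mu>"
  shows "injective_stage \<nu>"
proof -
  have cc: "chain_colimit \<nu> X f (X \<nu>) (\<lambda>\<mu>. f \<mu> \<nu>)"
    using limit assms(1,2) by blast
  have inj: "inj_on (f \<mu> \<sigma>) (topspace (space (X \<mu>)))" if "\<mu> \<le> \<sigma>" "\<sigma> < \<nu>" for \<mu> \<sigma>
    using IH[OF that(2)] that(1) unfolding injective_stage_def by blast
  have "locally_injective_family (paths (X \<nu>))"
  proof (rule chain_colimit_locally_injective_family[OF cc _ _ _ inj])
    show "mdspace (X \<mu>)" if "\<mu> < \<nu>" for \<mu>
      using mdspace that assms(1) by simp
    show "locally_injective_family (paths (X \<mu>))" if "\<mu> < \<nu>" for \<mu>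
      using IH[OF that] unfolding injective_stage_def by blast
    show "mdmap (X \<mu>) (X \<sigma>) (f \<mu> \<sigma>)" if "\<mu> \<le> \<sigma>" "\<sigma> < \<nu>" for \<mu> \<sigma>
      using maps that assms(1) by simp
    show "f \<sigma> \<sigma> y = y" if "\<sigma> < \<nu>" "y \<in> topspace (space (X \<sigma>))" for \<sigma> y
      using ident that assms(1) by simp
  qed
  moreover have "inj_on (f \<mu> \<nu>) (topspace (space (X \<mu>)))" if "\<mu> \<le> \<nu>" for \<mu>
  proof (cases "\<mu> = \<nu>")
    case True
    then show ?thesis using inj_on_transition_refl[OF assms(1)] by simp
  next
    case False
    with that have "\<mu> < \<nu>" by simp
    then show ?thesis
      using chain_colimit_inj_on[OF cc _ inj] by blast
  qed
  ultimately show ?thesis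
    unfolding injective_stage_def by blast
qed

lemma injective_stage: "\<nu> \<le> lam \<Longrightarrow> injective_stage \<nu>"
proof (induction \<nu> rule: less_induct)
  case (less \<nu>)
  consider "\<not> (\<exists>\<mu>. \<mu> < \<nu>)" | \<nu>0 where "is_succ \<nu> \<nu>0" | "is_limit \<nu>"
    unfolding is_limit_def by blast
  then show ?case
  proof cases
    case 1
    then show ?thesis using injective_stage_initial less.prems by blast
  next
    case 2
    then have "\<nu>0 < \<nu>" unfolding is_succ_def by blast
    then show ?thesis using injective_stage_successor[OF less.prems 2] less by simp
  next
    case 3
    then show ?thesis using injective_stage_limit[OF less.prems 3] less by simp
  qed
qed

end

theorem proposition5p13:
  fixes lam :: "'o::wellorder" and X :: "'o \<Rightarrow> 'a mdspace" and p :: "real \<Rightarrow> 'a"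
  assumes "cellular_tower lam X"
    and "p \<in> paths (X lam)"
  shows "locally_injective p"
proof -
  obtain f where "cellular_tower_maps lam X f"
    using assms(1) unfolding cellular_tower_iff by blast
  then have "cellular_tower_maps.injective_stage X f lam"
    by (simp add: cellular_tower_maps.injective_stage)
  with assms(2) show ?thesis
    unfolding cellular_tower_maps.injective_stage_def[OF \<open>cellular_tower_maps lam X f\<close>]
      locally_injective_family_def by blast
qed

end
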